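(* Let $\Sigma_A=(X,X_0,U,M,G_A,O_A)$ be the augmented transition system and let $\eta_x,\eta_u>0$, $M_{\max}\in\mathbb{N}_{>0}$ and $\varepsilon\ge\eta_x$. Let $\widetilde\Sigma^\varepsilon_A=(\widetilde X,\widetilde X_0,\widetilde U,\widetilde M,\widetilde G_A,\widetilde O_A)$ be the symbolic model of $\Sigma_A$ with these parameters. Then the relation $$R(\varepsilon)=\{(\tilde x,x)\in\widetilde X\times X:\ \|\tilde x-x\|\le\varepsilon\}$$ is a strong $\varepsilon$-approximate alternating simulation relation (strong $\varepsilon$-ASR) from $\widetilde\Sigma^\varepsilon_A$ to $\Sigma_A$.
   Context: Standing setup: a plant $x_{k+1}=f(x_k,u_k)$ with $f:\mathbb{R}^{n_x}\times\mathbb{R}^{n_u}\to\mathbb{R}^{n_x}$, compact initial set $X_0\subset\mathbb{R}^{n_x}$ and compact input set $U\subset\mathbb{R}^{n_u}$; there is $L_x\ge0$ with $\|f(x_1,u)-f(x_2,u)\|\le L_x\|x_1-x_2\|$ for all $x_1,x_2\in\mathbb{R}^{n_x}$, $u\in U$. $\|\cdot\|$ is the Euclidean norm and $\mathcal{B}_r(y)=\{y':\|y'-y\|\le r\}$. $\phi(x,u,m)$ ($m\ge1$ integer) is the state reached from $x$ by applying $u$ constantly for $m$ steps: $x_0=x$, $x_{k+1}=f(x_k,u)$, $\phi(x,u,m)=x_m$. Lattice: for $Y\subseteq\mathbb{R}^n$ and $\eta>0$, $[Y]_\eta=\{y\in Y:\ y_i=\frac{2\eta}{\sqrt n}a_i,\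 a_i\in\mathbb{Z},\ i=1,\dots,n\}$. Augmented transition system $\Sigma_A=(X,X_0,U,M,G_A,O_A)$: $X=\mathbb{R}^{n_x}$; $M=\mathbb{N}_{>0}$; $x^+\in G_A(x,u,m)$ iff $x^+=\phi(x,u,m)$; $O_A(x,u,m)$ is a set of finite state sequences with $(x_1,\dots,x_m)\in O_A(x,u,m)$ iff $x_p\in G_A(x,u,p)$ for all $p=1,\dots,m$. Symbolic model $\widetilde\Sigma^\varepsilon_A=(\widetilde X,\widetilde X_0,\widetilde U,\widetilde M,\widetilde G_A,\widetilde O_A)$ (defined for $\varepsilon\ge\eta_x$): $\widetilde X=[\mathbb{R}^{n_x}]_{\eta_x}$, $\widetilde X_0=[X_0]_{\eta_x}$, $\widetilde U=[U]_{\eta_u}$, $\widetilde M=\{1,\dots,M_{\max}\}$; $\tilde x^+\in\widetilde G_A(\tilde x,\tilde u,\tilde m)$ iff $\tilde x^+\in\widetilde X\cap\mathcal{B}_{\varepsilon_{\tilde m}}(\phi(\tilde x,\tilde u,\tilde m))$ where $\varepsilon_{\tilde m}=L_x^{\tilde m}\varepsilon+\eta_x$; $(\tilde x_1,\dots,\tilde x_{\tilde m})\in\widetilde O_A(\tilde x,\tilde u,\tilde m)$ iff $\tilde x_p\in\widetilde G_A(\tilde x,\tilde u,p)$ for all $p=1,\dots,\tilde m$. Strong $\varepsilon$-ASR: a relation $R\subseteq\widetilde X\times X$ is a strong $\varepsilon$-ASR from $\widetilde\Sigma^\varepsilon_A$ to $\Sigma_A$ if (D1) for every $\tilde x_0\in\widetilde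 X_0$ there is $x_0\in X_0$ with $(\tilde x_0,x_0)\in R$; (D2) every $(\tilde x,x)\in R$ satisfies $\|\tilde x-x\|\le\varepsilon$; (D3) for every $(\tilde x,x)\in R$ and every $\tilde u\in\widetilde U$, $\tilde m\in\widetilde M$, taking $u=\tilde u\in U$ and $m=\tilde m\in M$, for every $(x_1,\dots,x_m)\in O_A(x,u,m)$ there exists $(\tilde x_1,\dots,\tilde x_{m})\in\widetilde O_A(\tilde x,\tilde u,\tilde m)$ with $(\tilde x_p,x_p)\in R$ for all $p=1,\dots,m$. *)

theory Defs
  imports "HOL-Analysis.Analysis"
begin

definition lattice :: "(real^'n) set \<Rightarrow> real \<Rightarrow> (real^'n) set" where
  "lattice Y \<eta> = {y \<in> Y. \<forall>i. \<exists>a::int. y $ i = (2 * \<eta> / sqrt (real CARD('n))) * real_of_int a}"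

definition phi :: "(real^'n \<Rightarrow> real^'m \<Rightarrow> real^'n) \<Rightarrow> real^'n \<Rightarrow> real^'m \<Rightarrow> nat \<Rightarrow> real^'n" where
  "phi f x u m = ((\<lambda>z. f z u) ^^ m) x"

text \<open>Augmented transition system: transition map and output map.
  Finite state sequences (x_1,...,x_m) are lists of length m, x_p = xs ! (p-1).\<close>
definition G_A :: "(real^'n \<Rightarrow> real^'m \<Rightarrow> real^'n) \<Rightarrow> real^'n \<Rightarrow> real^'m \<Rightarrow> nat \<Rightarrow> (real^'n) set" where
  "G_A f x u m = {x'. x' = phi f x u m}"

definition O_A :: "(real^'n \<Rightarrow> real^'m \<Rightarrow> real^'n) \<Rightarrow> real^'n \<Rightarrow> real^'m \<Rightarrow> nat \<Rightarrow> (real^'n) list set" where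
  "O_A f x u m = {xs. length xs = m \<and> (\<forall>p\<in>{1..m}. xs ! (p - 1) \<in> G_A f x u p)}"

definition G_sym :: "(real^'n \<Rightarrow> real^'m \<Rightarrow> real^'n) \<Rightarrow> real \<Rightarrow> real \<Rightarrow> real \<Rightarrow>
    real^'n \<Rightarrow> real^'m \<Rightarrow> nat \<Rightarrow> (real^'n) set" where
  "G_sym f Lx \<epsilon> \<eta>x xt ut m =
     lattice UNIV \<eta>x \<inter> cball (phi f xt ut m) (Lx ^ m * \<epsilon> + \<eta>x)"

definition O_sym :: "(real^'n \<Rightarrow> real^'m \<Rightarrow> real^'n) \<Rightarrow> real \<Rightarrow> real \<Rightarrow> real \<Rightarrow>
    real^'n \<Rightarrow> real^'m \<Rightarrow> nat \<Rightarrow> (real^'n) list set" where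
  "O_sym f Lx \<epsilon> \<eta>x xt ut m =
     {xts. length xts = m \<and> (\<forall>p\<in>{1..m}. xts ! (p - 1) \<in> G_sym f Lx \<epsilon> \<eta>x xt ut p)}"

definition strong_eps_ASR ::
  "('x set) \<Rightarrow> ('x set) \<Rightarrow> ('u set) \<Rightarrow> (nat set) \<Rightarrow> ('x \<Rightarrow> 'u \<Rightarrow> nat \<Rightarrow> 'x list set) \<Rightarrow>
   ('x set) \<Rightarrow> ('x set) \<Rightarrow> ('u set) \<Rightarrow> (nat set) \<Rightarrow> ('x \<Rightarrow> 'u \<Rightarrow> nat \<Rightarrow> 'x list set) \<Rightarrow>
   real \<Rightarrow> ('x::real_normed_vector \<times> 'x) set \<Rightarrow> bool" where
  "strong_eps_ASR Xt Xt0 Ut Mt Ot X X0 U M Os \<epsilon> R \<longleftrightarrow>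
     R \<subseteq> Xt \<times> X \<and>
     (\<forall>xt0\<in>Xt0. \<exists>x0\<in>X0. (xt0, x0) \<in> R) \<and>
     (\<forall>(xt, x)\<in>R. norm (xt - x) \<le> \<epsilon>) \<and>
     (\<forall>(xt, x)\<in>R. \<forall>ut\<in>Ut. \<forall>mt\<in>Mt. ut \<in> U \<and> mt \<in> M \<and>
        (\<forall>xs\<in>Os x ut mt. \<exists>xts\<in>Ot xt ut mt.
           length xts = length xs \<and> (\<forall>p<mt. (xts ! p, xs ! p) \<in> R)))"

end

theory Submission
  imports Defs
begin

text \<open>Rounding every coordinate to the nearest multiple of the lattice spacing
  \<open>2\<eta>/\<surd>n\<close> moves a point by at most \<open>\<eta>/\<surd>n\<close> per coordinate, hence by at most \<open>\<eta>\<close>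
  in norm. Rounding the concrete trajectory therefore gives an admissible
  symbolic run: by the triangle inequality and the Lipschitz bound on \<open>\<phi>\<close>, the
  rounded \<open>p\<close>-th state lies within \<open>L\<^sub>x\<^sup>p \<epsilon> + \<eta>\<^sub>x\<close> of the symbolic prediction,
  and within \<open>\<eta>\<^sub>x \<le> \<epsilon>\<close> of the concrete state. Each lattice point of \<open>X\<^sub>0\<close> is
  related to itself.\<close>

definition lattice_round :: "real \<Rightarrow> real^'n \<Rightarrow> real^'n" where
  "lattice_round \<eta> y =
     (let c = 2 * \<eta> / sqrt (real CARD('n)) in \<chi> i. c * real_of_int (round (y $ i / c)))"

lemma lattice_round_in_lattice: "lattice_round \<eta> y \<in> lattice UNIV \<eta>"
  unfolding lattice_def lattice_round_def Let_def by auto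

lemma norm_lattice_round_le:
  fixes y :: "real^'n"
  assumes "\<eta> > 0"
  shows "norm (lattice_round \<eta> y - y) \<le> \<eta>"
proof -
  define n where "n = real CARD('n)"
  define c where "c = 2 * \<eta> / sqrt n"
  have n_pos: "n > 0" unfolding n_def by simp
  have c_pos: "c > 0" using assms n_pos unfolding c_def by simp
  have coord: "\<bar>(lattice_round \<eta> y - y) $ i\<bar> \<le> c / 2" for i
  proof -
    have "lattice_round \<eta> y $ i = c * real_of_int (round (y $ i / c))"
      by (simp add: lattice_round_def c_def n_def)
    then have "(lattice_round \<eta> y - y) $ i = c * (real_of_int (round (y $ i / c)) - y $ i / c)"
      using c_pos by (simp add: right_diff_distrib)
    also have "\<bar>\<dots>\<bar> = c * \<bar>real_of_int (round (y $ i / c)) - y $ i / c\<bar>"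
      using c_pos by (simp add: abs_mult)
    also have "\<dots> \<le> c * (1/2)"
      using c_pos by (intro mult_left_mono of_int_round_abs_le) auto
    finally show ?thesis by simp
  qed
  have "(norm (lattice_round \<eta> y - y))^2 = (\<Sum>i\<in>UNIV. ((lattice_round \<eta> y - y) $ i)^2)"
    by (simp only: power2_norm_eq_inner inner_vec_def) (simp add: power2_eq_square)
  also have "\<dots> \<le> (\<Sum>i\<in>(UNIV::'n set). (c/2)^2)"
    using coord by (intro sum_mono) (metis abs_le_square_iff abs_of_pos c_pos half_gt_zero)
  also have "\<dots> = \<eta>^2"
    using n_pos by (simp add: c_def n_def power_divide)
  finally show ?thesis
    using assms by (simp add: power2_le_iff_abs_le)
qed

lemma phi_Suc: "phi f x u (Suc p) = f (phi f x u p) u"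
  by (simp add: phi_def)

lemma norm_phi_diff_le:
  assumes "Lx \<ge> 0" and "\<forall>x1 x2. norm (f x1 u - f x2 u) \<le> Lx * norm (x1 - x2)"
  shows "norm (phi f x u p - phi f y u p) \<le> Lx ^ p * norm (x - y)"
proof (induction p)
  case 0
  then show ?case by (simp add: phi_def)
next
  case (Suc p)
  have "norm (phi f x u (Suc p) - phi f y u (Suc p)) \<le> Lx * norm (phi f x u p - phi f y u p)"
    using assms(2) by (simp add: phi_Suc)
  also have "\<dots> \<le> Lx * (Lx ^ p * norm (x - y))"
    using Suc assms(1) by (rule mult_left_mono)
  finally show ?case by simp
qed

lemma mem_O_A_iff:
  "xs \<in> O_A f x u m \<longleftrightarrow> length xs = m \<and> (\<forall>p<m. xs ! p = phi f x u (Suc p))"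
  unfolding O_A_def G_A_def image_Suc_lessThan[symmetric] by auto

lemma O_A_eq: "O_A f x u m = {map (\<lambda>p. phi f x u (Suc p)) [0..<m]}"
  by (auto simp: mem_O_A_iff intro: nth_equalityI)

lemma map_in_O_sym_iff:
  "map g [0..<m] \<in> O_sym f Lx \<epsilon> \<eta>x xt u m \<longleftrightarrow> (\<forall>p<m. g p \<in> G_sym f Lx \<epsilon> \<eta>x xt u (Suc p))"
  unfolding O_sym_def image_Suc_lessThan[symmetric] by auto

lemma lattice_round_phi_in_G_sym:
  assumes "Lx \<ge> 0" and "\<forall>x1 x2. norm (f x1 u - f x2 u) \<le> Lx * norm (x1 - x2)"
    and "\<eta>x > 0" and "norm (xt - x) \<le> \<epsilon>"
  shows "lattice_round \<eta>x (phi f x u p) \<in> G_sym f Lx \<epsilon> \<eta>x xt u p"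
proof -
  let ?z = "lattice_round \<eta>x (phi f x u p)"
  have "norm (?z - phi f xt u p) \<le> norm (?z - phi f x u p) + norm (phi f x u p - phi f xt u p)"
    using norm_triangle_ineq[of "?z - phi f x u p" "phi f x u p - phi f xt u p"] by simp
  also have "\<dots> \<le> \<eta>x + Lx ^ p * norm (x - xt)"
    using norm_lattice_round_le[OF assms(3)] norm_phi_diff_le[where f=f and u=u, OF assms(1,2)] by (rule add_mono)
  also have "\<dots> \<le> \<eta>x + Lx ^ p * \<epsilon>"
    using assms(1,4) by (simp add: mult_left_mono norm_minus_commute)
  finally show ?thesis
    by (simp add: G_sym_def lattice_round_in_lattice dist_norm norm_minus_commute)
qed

theorem lemma2:
  fixes f :: "real^'n \<Rightarrow> real^'m \<Rightarrow> real^'n"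
    and X0 :: "(real^'n) set" and U :: "(real^'m) set"
    and Lx \<eta>x \<eta>u \<epsilon> :: real and Mmax :: nat
  assumes "compact X0" and "compact U"
    and "Lx \<ge> 0"
    and "\<forall>x1 x2. \<forall>u\<in>U. norm (f x1 u - f x2 u) \<le> Lx * norm (x1 - x2)"
    and "\<eta>x > 0" and "\<eta>u > 0" and "Mmax > 0" and "\<epsilon> \<ge> \<eta>x"
  shows "strong_eps_ASR
           (lattice UNIV \<eta>x) (lattice X0 \<eta>x) (lattice U \<eta>u) {1..Mmax} (O_sym f Lx \<epsilon> \<eta>x)
           UNIV X0 U {m. m > 0} (O_A f)
           \<epsilon> {(xt, x). xt \<in> lattice UNIV \<eta>x \<and> x \<in> UNIV \<and> norm (xt - x) \<le> \<epsilon>}"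
proof -
  have step: "map (\<lambda>p. lattice_round \<eta>x (phi f x u (Suc p))) [0..<m] \<in> O_sym f Lx \<epsilon> \<eta>x xt u m"
    if "u \<in> U" "norm (xt - x) \<le> \<epsilon>" for xt x u m
    using that assms(3-5) by (simp add: map_in_O_sym_iff lattice_round_phi_in_G_sym)
  have round_close: "norm (lattice_round \<eta>x y - y) \<le> \<epsilon>" for y :: "real^'n"
    using norm_lattice_round_le[OF assms(5)] assms(8) by (rule order_trans)
  show ?thesis
    unfolding strong_eps_ASR_def O_A_eq
  proof (intro conjI ballI; clarify?)
    fix xt0 assume "xt0 \<in> lattice X0 \<eta>x"
    then show "\<exists>x0\<in>X0. (xt0, x0) \<in> {(xt, x). xt \<in> lattice UNIV \<eta>x \<and> x \<in> UNIV \<and> norm (xt - x) \<le> \<epsilon>}"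
      using assms(5,8) by (intro bexI[of _ xt0]) (simp_all add: lattice_def)
  next
    fix xt x :: "real^'n" and u m
    assume close: "norm (xt - x) \<le> \<epsilon>" and u: "u \<in> lattice U \<eta>u" and m: "m \<in> {1..Mmax}"
    from u have "u \<in> U" by (simp add: lattice_def)
    then show "u \<in> U \<and> m \<in> {m. m > 0} \<and> (\<forall>xs\<in>{map (\<lambda>p. phi f x u (Suc p)) [0..<m]}.
        \<exists>xts\<in>O_sym f Lx \<epsilon> \<eta>x xt u m. length xts = length xs \<and>
          (\<forall>p<m. (xts ! p, xs ! p) \<in> {(xt, x). xt \<in> lattice UNIV \<eta>x \<and> x \<in> UNIV \<and> norm (xt - x) \<le> \<epsilon>}))"
      using m round_close by (auto simp: lattice_round_in_lattice intro!: bexI[OF _ step[OF _ close]])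
  qed
qed

end
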